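(* Let $\mathbf M$ be an $(N+1,k)$-admissible matrix with characteristic triple $(\mu,\widetilde{\mathbf w},\widetilde{\mathbf z})$, let $h\in(0,1]$ and $\mathbf M^{(h)}:=\mathbf I+h(\mathbf M-\mathbf I)$. Then $\mathbf M^{(h)}$ has characteristic triple $(\mu_h,\widetilde{\mathbf w},\widetilde{\mathbf z})$ with $\mu_h:=1-h(1-\mu)$; in particular $\mathbf M$ and $\mathbf M^{(h)}$ share their characteristic eigenvectors. Moreover, $\mathbf M^{(h)}$ is micro-reversible if and only if $\mathbf M$ is. Finally, if $k=2$ and $\mathbf M$ is a Kimura matrix with fixation probability $\mathbf F$, then so is $\mathbf M^{(h)}$ (with the same $\mathbf F$).
   Context: Column-stochastic matrices. For $1\le k<N-1$, an $(N+1)\times(N+1)$ column-stochastic $\mathbf M$ is $(N+1,k)$-admissible if, after a simultaneous permutation of rows and columns, $\mathbf M=\begin{pmatrix}\widetilde{\mathbf M}&\mathbf 0\\ \mathbf A&\mathbf I\end{pmatrix}$ with $\mathbf I$ the $k\times k$ identity, $\widetilde{\mathbf M}$ irreducible of size $N+1-k$ (the core) and $\mathbf A$ with no zero row. The characteristic triple $(\mu,\widetilde{\mathbf w},\widetilde{\mathbf z})$ is $\mu=\rho(\widetilde{\mathbf M})\in(0,1)$ together with the positive left/right eigenvectors $\widetilde{\mathbf w},\widetilde{\mathbf z}$ of the core for $\mu$, normalised by $\langle\widetilde{\mathbf w},\mathbf 1\rangle=\langle\widetilde{\mathbf w},\widetilde{\mathbf z}\rangle=1$. $\mathbf M$ is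 micro-reversible if $\widetilde w_i\widetilde M_{ij}\widetilde z_j=\widetilde w_j\widetilde M_{ji}\widetilde z_i$ for all $i,j$. An $(N+1,2)$-admissible matrix is called a Kimura matrix; labelling states $0,\dots,N$ with absorbing states $0$ and $N$, its fixation probability is the unique vector $\mathbf F$ with $\mathbf F^\dagger\mathbf M=\mathbf F^\dagger$, $F_0=0$, $F_N=1$. *)

theory Defs
  imports "Jordan_Normal_Form.Spectral_Radius"
begin

text \<open>An (N+1)x(N+1) real matrix is a function M :: nat => nat => real,
  M i j being the entry in row i, column j, with states (indices) 0..N; entries
  outside this range are irrelevant. Column-stochastic means: nonnegative entries and
  every column sums to 1. A simultaneous permutation of rows and columns bringing M into
  the admissible block form is encoded by the set K of states put into the last k
  positions (the absorbing states); T = {0..N} - K are the core (transient) states.\<close>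

definition col_stochastic :: "nat \<Rightarrow> (nat \<Rightarrow> nat \<Rightarrow> real) \<Rightarrow> bool" where
  "col_stochastic N M \<longleftrightarrow>
     (\<forall>i\<le>N. \<forall>j\<le>N. 0 \<le> M i j) \<and> (\<forall>j\<le>N. (\<Sum>i\<le>N. M i j) = 1)"

definition core_states :: "nat \<Rightarrow> nat set \<Rightarrow> nat set" where
  "core_states N K = {..N} - K"

definition irreducible_on :: "nat set \<Rightarrow> (nat \<Rightarrow> nat \<Rightarrow> real) \<Rightarrow> bool" where
  "irreducible_on T M \<longleftrightarrow>
     (\<forall>i\<in>T. \<forall>j\<in>T. (i, j) \<in> {(a, b). a \<in> T \<and> b \<in> T \<and> 0 < M a b}\<^sup>+)"

definition admissible_with :: "nat \<Rightarrow> nat \<Rightarrow> nat set \<Rightarrow> (nat \<Rightarrow> nat \<Rightarrow> real) \<Rightarrow> bool" where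
  "admissible_with N k K M \<longleftrightarrow>
     1 \<le> k \<and> k < N - 1 \<and>
     col_stochastic N M \<and>
     K \<subseteq> {..N} \<and> card K = k \<and>
     (\<forall>j\<in>K. \<forall>i\<le>N. M i j = (if i = j then 1 else 0)) \<and>
     irreducible_on (core_states N K) M \<and>
     (\<forall>i\<in>K. \<exists>j\<in>core_states N K. M i j \<noteq> 0)"

definition admissible :: "nat \<Rightarrow> nat \<Rightarrow> (nat \<Rightarrow> nat \<Rightarrow> real) \<Rightarrow> bool" where
  "admissible N k M \<longleftrightarrow> (\<exists>K. admissible_with N k K M)"

definition core_mat :: "nat set \<Rightarrow> (nat \<Rightarrow> nat \<Rightarrow> real) \<Rightarrow> complex mat" where
  "core_mat T M = (let xs = sorted_list_of_set T in
     mat (card T) (card T) (\<lambda>(a, b). complex_of_real (M (xs ! a) (xs ! b))))"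

definition char_triple ::
  "nat \<Rightarrow> nat set \<Rightarrow> (nat \<Rightarrow> nat \<Rightarrow> real) \<Rightarrow> real \<Rightarrow> (nat \<Rightarrow> real) \<Rightarrow> (nat \<Rightarrow> real) \<Rightarrow> bool" where
  "char_triple N K M \<mu> w z \<longleftrightarrow>
     (let T = core_states N K in
       \<mu> = spectral_radius (core_mat T M) \<and> 0 < \<mu> \<and> \<mu> < 1 \<and>
       (\<forall>i\<in>T. 0 < w i \<and> 0 < z i) \<and>
       (\<forall>j\<in>T. (\<Sum>i\<in>T. w i * M i j) = \<mu> * w j) \<and>
       (\<forall>i\<in>T. (\<Sum>j\<in>T. M i j * z j) = \<mu> * z i) \<and>
       (\<Sum>i\<in>T. w i) = 1 \<and> (\<Sum>i\<in>T. w i * z i) = 1)"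

definition micro_reversible ::
  "nat \<Rightarrow> nat set \<Rightarrow> (nat \<Rightarrow> nat \<Rightarrow> real) \<Rightarrow> (nat \<Rightarrow> real) \<Rightarrow> (nat \<Rightarrow> real) \<Rightarrow> bool" where
  "micro_reversible N K M w z \<longleftrightarrow>
     (\<forall>i\<in>core_states N K. \<forall>j\<in>core_states N K. w i * M i j * z j = w j * M j i * z i)"

definition kimura :: "nat \<Rightarrow> (nat \<Rightarrow> nat \<Rightarrow> real) \<Rightarrow> bool" where
  "kimura N M \<longleftrightarrow> admissible_with N 2 {0, N} M"

definition fixation_eqs :: "nat \<Rightarrow> (nat \<Rightarrow> nat \<Rightarrow> real) \<Rightarrow> (nat \<Rightarrow> real) \<Rightarrow> bool" where
  "fixation_eqs N M F \<longleftrightarrow>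
     F 0 = 0 \<and> F N = 1 \<and> (\<forall>j\<le>N. (\<Sum>i\<le>N. F i * M i j) = F j)"

definition fixation_probability :: "nat \<Rightarrow> (nat \<Rightarrow> nat \<Rightarrow> real) \<Rightarrow> (nat \<Rightarrow> real) \<Rightarrow> bool" where
  "fixation_probability N M F \<longleftrightarrow>
     fixation_eqs N M F \<and> (\<forall>G. fixation_eqs N M G \<longrightarrow> (\<forall>i\<le>N. G i = F i))"

definition lazy_mat :: "real \<Rightarrow> (nat \<Rightarrow> nat \<Rightarrow> real) \<Rightarrow> nat \<Rightarrow> nat \<Rightarrow> real" where
  "lazy_mat h M i j = (if i = j then 1 else 0) + h * (M i j - (if i = j then 1 else 0))"

end

theory Submission
  imports Defs
begin

text \<open>M_h = I + h (M - I) = (1 - h) I + h M, also after restriction to the core. Hence the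
  core of M_h has the same eigenvectors as the core of M, with the eigenvalues moved by
  l \<mapsto> 1 - h + h l. By the triangle inequality this map sends every eigenvalue into the disc of
  radius 1 - h + h \<mu>, and it sends the Perron root \<mu> onto its boundary, so the spectral radius of
  the new core is 1 - h + h \<mu>. Off the diagonal the entries of M are only scaled by h > 0, which
  preserves the zero pattern (hence admissibility) and micro-reversibility; and
  F^T M_h - F^T = h (F^T M - F^T), so both matrices have the same fixation equations.\<close>

lemma sum_sorted_list_of_set_nth:
  assumes "finite T"
  shows "(\<Sum>a<card T. f (sorted_list_of_set T ! a)) = sum f T"
  using assms sum.distinct_set_conv_list[of "sorted_list_of_set T" f]
  by (simp add: sum.list_conv_set_nth lessThan_atLeast0)

lemma affine_mult_mat_vec:
  fixes A :: "'a::comm_ring_1 mat"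
  assumes A: "A \<in> carrier_mat n n" and v: "v \<in> carrier_vec n"
  shows "(a \<cdot>\<^sub>m 1\<^sub>m n + b \<cdot>\<^sub>m A) *\<^sub>v v = a \<cdot>\<^sub>v v + b \<cdot>\<^sub>v (A *\<^sub>v v)"
proof (rule eq_vecI)
  fix i assume "i < dim_vec (a \<cdot>\<^sub>v v + b \<cdot>\<^sub>v (A *\<^sub>v v))"
  then have i: "i < n" using A v by simp
  have "((a \<cdot>\<^sub>m 1\<^sub>m n + b \<cdot>\<^sub>m A) *\<^sub>v v) $ i
      = (\<Sum>j<n. a * (if i = j then v $ j else 0) + b * (A $$ (i, j) * v $ j))"
    using A v i by (auto simp: scalar_prod_def lessThan_atLeast0 algebra_simps intro!: sum.cong)
  also have "\<dots> = a * v $ i + b * (\<Sum>j<n. A $$ (i, j) * v $ j)"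
    using i by (simp add: sum.distrib sum_distrib_left[symmetric])
  also have "\<dots> = (a \<cdot>\<^sub>v v + b \<cdot>\<^sub>v (A *\<^sub>v v)) $ i"
    using A v i by (simp add: scalar_prod_def lessThan_atLeast0)
  finally show "((a \<cdot>\<^sub>m 1\<^sub>m n + b \<cdot>\<^sub>m A) *\<^sub>v v) $ i = (a \<cdot>\<^sub>v v + b \<cdot>\<^sub>v (A *\<^sub>v v)) $ i" .
qed (use A v in simp)

lemma eigenvector_affine_iff:
  fixes A :: "'a::field mat"
  assumes A: "A \<in> carrier_mat n n" and b: "b \<noteq> 0"
  shows "eigenvector (a \<cdot>\<^sub>m 1\<^sub>m n + b \<cdot>\<^sub>m A) v (a + b * l) \<longleftrightarrow> eigenvector A v l"
proof -
  have "(a \<cdot>\<^sub>m 1\<^sub>m n + b \<cdot>\<^sub>m A) *\<^sub>v v = (a + b * l) \<cdot>\<^sub>v v \<longleftrightarrow> A *\<^sub>v v = l \<cdot>\<^sub>v v"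
    if v: "v \<in> carrier_vec n"
  proof -
    have "(a \<cdot>\<^sub>m 1\<^sub>m n + b \<cdot>\<^sub>m A) *\<^sub>v v = (a + b * l) \<cdot>\<^sub>v v
        \<longleftrightarrow> (\<forall>i<n. a * v $ i + b * (A *\<^sub>v v) $ i = (a + b * l) * v $ i)"
      using A v by (auto simp: affine_mult_mat_vec vec_eq_iff)
    also have "\<dots> \<longleftrightarrow> (\<forall>i<n. (A *\<^sub>v v) $ i = l * v $ i)"
      using b by (simp add: distrib_right)
    also have "\<dots> \<longleftrightarrow> A *\<^sub>v v = l \<cdot>\<^sub>v v"
      using A v by (auto simp: vec_eq_iff)
    finally show ?thesis .
  qed
  then show ?thesis
    using A unfolding eigenvector_def by auto
qed

lemma spectrum_affine:
  fixes A :: "'a::field mat"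
  assumes A: "A \<in> carrier_mat n n" and b: "b \<noteq> 0"
  shows "spectrum (a \<cdot>\<^sub>m 1\<^sub>m n + b \<cdot>\<^sub>m A) = (\<lambda>l. a + b * l) ` spectrum A"
proof (intro Set.set_eqI iffI)
  fix l' assume "l' \<in> spectrum (a \<cdot>\<^sub>m 1\<^sub>m n + b \<cdot>\<^sub>m A)"
  then obtain v where v: "eigenvector (a \<cdot>\<^sub>m 1\<^sub>m n + b \<cdot>\<^sub>m A) v l'"
    unfolding spectrum_def eigenvalue_def by blast
  define l where "l = (l' - a) / b"
  have l': "l' = a + b * l"
    using b by (simp add: l_def)
  have "l \<in> spectrum A"
    using v eigenvector_affine_iff[OF A b] unfolding l' spectrum_def eigenvalue_def by blast
  then show "l' \<in> (\<lambda>l. a + b * l) ` spectrum A"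
    unfolding l' by (rule imageI)
next
  fix l' assume "l' \<in> (\<lambda>l. a + b * l) ` spectrum A"
  then obtain l v where "l' = a + b * l" "eigenvector A v l"
    unfolding spectrum_def eigenvalue_def by blast
  then show "l' \<in> spectrum (a \<cdot>\<^sub>m 1\<^sub>m n + b \<cdot>\<^sub>m A)"
    using eigenvector_affine_iff[OF A b] unfolding spectrum_def eigenvalue_def by blast
qed

text \<open>The hypothesis that the spectral radius is itself an eigenvalue (Perron-Frobenius) is
  essential: the map l \<mapsto> 1 - h + h l may shrink the modulus of other eigenvalues, e.g. of -\<rho>(A).\<close>
lemma spectral_radius_affine:
  fixes A :: "complex mat"
  assumes A: "A \<in> carrier_mat n n"
    and perron: "complex_of_real (spectral_radius A) \<in> spectrum A"
    and h: "0 < h" "h \<le> 1"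
  shows "spectral_radius (complex_of_real (1 - h) \<cdot>\<^sub>m 1\<^sub>m n + complex_of_real h \<cdot>\<^sub>m A)
       = 1 - h + h * spectral_radius A"
    (is "spectral_radius ?B = _")
proof (rule antisym)
  let ?f = "\<lambda>l. complex_of_real (1 - h) + complex_of_real h * l"
  have n: "0 < n"
    using eigenvalue_imp_nonzero_dim[OF A] perron unfolding spectrum_def by blast
  have B: "?B \<in> carrier_mat n n"
    using A by simp
  have spec: "spectrum ?B = ?f ` spectrum A"
    by (rule spectrum_affine[OF A]) (use h in simp)
  obtain l where l: "l \<in> spectrum A" "spectral_radius ?B = norm (?f l)"
    using spectral_radius_mem_max(1)[OF B n] unfolding spec by blast
  have "norm (?f l) \<le> norm (complex_of_real (1 - h)) + norm (complex_of_real h * l)"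
    by (rule norm_triangle_ineq)
  also have "\<dots> = \<bar>1 - h\<bar> + \<bar>h\<bar> * norm l"
    by (simp only: norm_mult norm_of_real)
  also have "\<dots> \<le> 1 - h + h * spectral_radius A"
    using spectral_radius_mem_max(2)[OF A n] l(1) h by simp
  finally show "spectral_radius ?B \<le> 1 - h + h * spectral_radius A"
    using l(2) by simp
  have "0 \<le> spectral_radius A"
    using spectral_radius_mem_max(1)[OF A n] by auto
  moreover have "?f (spectral_radius A) = complex_of_real (1 - h + h * spectral_radius A)"
    by simp
  ultimately have "norm (?f (spectral_radius A)) = 1 - h + h * spectral_radius A"
    using h by (simp only: norm_of_real) simp
  moreover have "?f (spectral_radius A) \<in> spectrum ?B"
    unfolding spec using perron by (rule imageI)
  ultimately show "1 - h + h * spectral_radius A \<le> spectral_radius ?B"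
    using spectral_radius_mem_max(2)[OF B n] by (metis imageI)
qed

lemma lazy_mat_eq: "lazy_mat h M i j = (if i = j then 1 - h + h * M i j else h * M i j)"
  unfolding lazy_mat_def by (auto simp: algebra_simps)

lemma lazy_mat_pos:
  assumes "0 < M i j" "0 < h" "h \<le> 1"
  shows "0 < lazy_mat h M i j"
  using assms by (auto simp: lazy_mat_eq intro: add_nonneg_pos)

lemma sum_mult_lazy_mat:
  assumes "finite A" "j \<in> A"
  shows "(\<Sum>i\<in>A. f i * lazy_mat h M i j) = (1 - h) * f j + h * (\<Sum>i\<in>A. f i * M i j)"
proof -
  have "(\<Sum>i\<in>A. f i * lazy_mat h M i j) = (\<Sum>i\<in>A. (1 - h) * (if i = j then f i else 0) + h * (f i * M i j))"
    by (rule sum.cong) (auto simp: lazy_mat_def algebra_simps)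
  then show ?thesis
    using assms by (simp add: sum.distrib sum_distrib_left[symmetric])
qed

lemma sum_lazy_mat_mult:
  assumes "finite A" "i \<in> A"
  shows "(\<Sum>j\<in>A. lazy_mat h M i j * f j) = (1 - h) * f i + h * (\<Sum>j\<in>A. M i j * f j)"
  using sum_mult_lazy_mat[OF assms, of f h "\<lambda>a b. M b a"]
  by (simp add: lazy_mat_def mult.commute eq_commute[of i])

lemma col_stochastic_lazy_mat:
  assumes "col_stochastic N M" "0 \<le> h" "h \<le> 1"
  shows "col_stochastic N (lazy_mat h M)"
  unfolding col_stochastic_def
proof (intro conjI allI impI)
  fix i j assume "i \<le> N" "j \<le> N"
  then show "0 \<le> lazy_mat h M i j"
    using assms by (auto simp: col_stochastic_def lazy_mat_eq)
next
  fix j assume "j \<le> N"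
  then show "(\<Sum>i\<le>N. lazy_mat h M i j) = 1"
    using assms sum_mult_lazy_mat[of "{..N}" j "\<lambda>_. 1" h M]
    by (simp add: col_stochastic_def)
qed

lemma irreducible_on_lazy_mat:
  assumes "irreducible_on T M" "0 < h" "h \<le> 1"
  shows "irreducible_on T (lazy_mat h M)"
proof -
  have "{(a, b). a \<in> T \<and> b \<in> T \<and> 0 < M a b} \<subseteq> {(a, b). a \<in> T \<and> b \<in> T \<and> 0 < lazy_mat h M a b}"
    using assms(2,3) lazy_mat_pos by blast
  then show ?thesis
    using assms(1) trancl_mono unfolding irreducible_on_def by blast
qed

lemma admissible_with_lazy_mat:
  assumes "admissible_with N k K M" "0 < h" "h \<le> 1"
  shows "admissible_with N k K (lazy_mat h M)"
proof -
  have "\<exists>j\<in>core_states N K. lazy_mat h M i j \<noteq> 0" if "i \<in> K" for i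
  proof -
    from assms(1) that obtain j where "j \<in> core_states N K" "M i j \<noteq> 0"
      unfolding admissible_with_def by blast
    moreover from this that have "i \<noteq> j" by (auto simp: core_states_def)
    ultimately show ?thesis using assms(2) by (auto simp: lazy_mat_eq)
  qed
  then show ?thesis
    using assms col_stochastic_lazy_mat irreducible_on_lazy_mat
    unfolding admissible_with_def by (auto simp: lazy_mat_eq)
qed

lemma core_mat_carrier: "core_mat T M \<in> carrier_mat (card T) (card T)"
  by (simp add: core_mat_def Let_def)

lemma core_mat_lazy_mat:
  "core_mat T (lazy_mat h M)
     = complex_of_real (1 - h) \<cdot>\<^sub>m 1\<^sub>m (card T) + complex_of_real h \<cdot>\<^sub>m core_mat T M"
proof (rule eq_matI)
  fix a b assume "a < dim_row (complex_of_real (1 - h) \<cdot>\<^sub>m 1\<^sub>m (card T) + complex_of_real h \<cdot>\<^sub>m core_mat T M)"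
    and "b < dim_col (complex_of_real (1 - h) \<cdot>\<^sub>m 1\<^sub>m (card T) + complex_of_real h \<cdot>\<^sub>m core_mat T M)"
  then have ab: "a < card T" "b < card T"
    by (simp_all add: core_mat_def Let_def)
  then have "sorted_list_of_set T ! a = sorted_list_of_set T ! b \<longleftrightarrow> a = b"
    by (simp add: nth_eq_iff_index_eq)
  then show "core_mat T (lazy_mat h M) $$ (a, b)
    = (complex_of_real (1 - h) \<cdot>\<^sub>m 1\<^sub>m (card T) + complex_of_real h \<cdot>\<^sub>m core_mat T M) $$ (a, b)"
    using ab by (simp add: core_mat_def Let_def lazy_mat_eq)
qed (simp_all add: core_mat_def Let_def)

lemma of_real_mem_spectrum_core_mat:
  assumes T: "finite T" and i0: "i0 \<in> T" "z i0 \<noteq> 0"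
    and z: "\<forall>i\<in>T. (\<Sum>j\<in>T. M i j * z j) = \<mu> * z i"
  shows "complex_of_real \<mu> \<in> spectrum (core_mat T M)"
proof -
  let ?xs = "sorted_list_of_set T"
  define v where "v = vec (card T) (\<lambda>a. complex_of_real (z (?xs ! a)))"
  obtain a0 where a0: "a0 < card T" "?xs ! a0 = i0"
    using T i0(1) by (metis in_set_conv_nth length_sorted_list_of_set set_sorted_list_of_set)
  have "v \<noteq> 0\<^sub>v (card T)"
    using a0 i0(2) by (auto simp: v_def vec_eq_iff)
  moreover have "core_mat T M *\<^sub>v v = complex_of_real \<mu> \<cdot>\<^sub>v v"
  proof (rule eq_vecI)
    fix a assume "a < dim_vec (complex_of_real \<mu> \<cdot>\<^sub>v v)"
    then have a: "a < card T" by (simp add: v_def)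
    then have "?xs ! a \<in> T"
      using T by (metis nth_mem length_sorted_list_of_set set_sorted_list_of_set)
    then have eigen_row: "(\<Sum>j\<in>T. M (?xs ! a) j * z j) = \<mu> * z (?xs ! a)"
      using z by blast
    have "(core_mat T M *\<^sub>v v) $ a
        = (\<Sum>b<card T. complex_of_real (M (?xs ! a) (?xs ! b) * z (?xs ! b)))"
      using a by (simp add: core_mat_def Let_def v_def scalar_prod_def lessThan_atLeast0)
    also have "\<dots> = (\<Sum>j\<in>T. complex_of_real (M (?xs ! a) j * z j))"
      by (rule sum_sorted_list_of_set_nth[OF T])
    also have "\<dots> = complex_of_real (\<mu> * z (?xs ! a))"
      by (simp only: of_real_sum[symmetric] eigen_row)
    also have "\<dots> = (complex_of_real \<mu> \<cdot>\<^sub>v v) $ a"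
      using a by (simp add: v_def)
    finally show "(core_mat T M *\<^sub>v v) $ a = (complex_of_real \<mu> \<cdot>\<^sub>v v) $ a" .
  qed (simp add: core_mat_def Let_def v_def)
  moreover have "v \<in> carrier_vec (card T)"
    by (simp add: v_def)
  moreover have "dim_row (core_mat T M) = card T"
    by (simp add: core_mat_def Let_def)
  ultimately have "eigenvector (core_mat T M) v (complex_of_real \<mu>)"
    unfolding eigenvector_def by simp
  then show ?thesis
    unfolding spectrum_def eigenvalue_def by blast
qed

lemma char_triple_lazy_mat:
  assumes triple: "char_triple N K M \<mu> w z" and h: "0 < h" "h \<le> 1"
  shows "char_triple N K (lazy_mat h M) (1 - h * (1 - \<mu>)) w z"
proof -
  define T where "T = core_states N K"
  have T: "finite T"
    by (simp add: T_def core_states_def)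
  have \<mu>: "\<mu> = spectral_radius (core_mat T M)" "0 < \<mu>" "\<mu> < 1"
    and pos: "\<forall>i\<in>T. 0 < w i \<and> 0 < z i"
    and w: "\<forall>j\<in>T. (\<Sum>i\<in>T. w i * M i j) = \<mu> * w j"
    and z: "\<forall>i\<in>T. (\<Sum>j\<in>T. M i j * z j) = \<mu> * z i"
    and norm: "(\<Sum>i\<in>T. w i) = 1" "(\<Sum>i\<in>T. w i * z i) = 1"
    using triple unfolding char_triple_def Let_def T_def by auto
  obtain i0 where i0: "i0 \<in> T"
    using norm(1) by force
  have "z i0 \<noteq> 0"
    using pos i0 by force
  then have "complex_of_real \<mu> \<in> spectrum (core_mat T M)"
    by (rule of_real_mem_spectrum_core_mat[OF T i0 _ z])
  then have "spectral_radius (core_mat T (lazy_mat h M)) = 1 - h * (1 - \<mu>)"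
    using spectral_radius_affine[OF core_mat_carrier _ h] \<mu>(1)
    by (simp add: core_mat_lazy_mat algebra_simps)
  moreover have "\<forall>j\<in>T. (\<Sum>i\<in>T. w i * lazy_mat h M i j) = (1 - h * (1 - \<mu>)) * w j"
    using w sum_mult_lazy_mat[OF T] by (simp add: algebra_simps)
  moreover have "\<forall>i\<in>T. (\<Sum>j\<in>T. lazy_mat h M i j * z j) = (1 - h * (1 - \<mu>)) * z i"
    using z sum_lazy_mat_mult[OF T] by (simp add: algebra_simps)
  moreover have "0 < 1 - h * (1 - \<mu>)"
    using h mult_pos_pos[OF h(1) \<mu>(2)] by (simp add: right_diff_distrib)
  moreover have "1 - h * (1 - \<mu>) < 1"
    using h \<mu>(3) by simp
  ultimately show ?thesis
    using pos norm unfolding char_triple_def Let_def T_def[symmetric] by simp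
qed

lemma micro_reversible_lazy_mat_iff:
  assumes "h \<noteq> 0"
  shows "micro_reversible N K (lazy_mat h M) w z \<longleftrightarrow> micro_reversible N K M w z"
proof -
  have "w i * lazy_mat h M i j * z j = w j * lazy_mat h M j i * z i
    \<longleftrightarrow> w i * M i j * z j = w j * M j i * z i" for i j
    using assms by (cases "i = j") (auto simp: lazy_mat_eq algebra_simps)
  then show ?thesis
    unfolding micro_reversible_def by simp
qed

lemma fixation_eqs_lazy_mat_iff:
  assumes "h \<noteq> 0"
  shows "fixation_eqs N (lazy_mat h M) F \<longleftrightarrow> fixation_eqs N M F"
proof -
  have "(\<Sum>i\<le>N. F i * lazy_mat h M i j) = F j \<longleftrightarrow> (\<Sum>i\<le>N. F i * M i j) = F j"
    if "j \<le> N" for j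
    using that sum_mult_lazy_mat[of "{..N}" j F h M] assms
    by (auto simp: algebra_simps)
  then show ?thesis
    unfolding fixation_eqs_def by auto
qed

lemma fixation_probability_lazy_mat_iff:
  assumes "h \<noteq> 0"
  shows "fixation_probability N (lazy_mat h M) F \<longleftrightarrow> fixation_probability N M F"
  using fixation_eqs_lazy_mat_iff[OF assms] unfolding fixation_probability_def by simp

theorem lemma8:
  fixes N k :: nat and K :: "nat set" and M :: "nat \<Rightarrow> nat \<Rightarrow> real"
    and \<mu> h :: real and w z :: "nat \<Rightarrow> real"
  assumes adm: "admissible_with N k K M"
    and triple: "char_triple N K M \<mu> w z"
    and h: "0 < h" "h \<le> 1"
  shows "admissible_with N k K (lazy_mat h M)
         \<and> char_triple N K (lazy_mat h M) (1 - h * (1 - \<mu>)) w z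
         \<and> (micro_reversible N K (lazy_mat h M) w z \<longleftrightarrow> micro_reversible N K M w z)
         \<and> (\<forall>F. k = 2 \<and> kimura N M \<and> fixation_probability N M F \<longrightarrow>
                kimura N (lazy_mat h M) \<and> fixation_probability N (lazy_mat h M) F)"
proof (intro conjI allI impI)
  have h0: "h \<noteq> 0"
    using h by simp
  show "admissible_with N k K (lazy_mat h M)"
    by (rule admissible_with_lazy_mat[OF adm h])
  show "char_triple N K (lazy_mat h M) (1 - h * (1 - \<mu>)) w z"
    by (rule char_triple_lazy_mat[OF triple h])
  show "micro_reversible N K (lazy_mat h M) w z \<longleftrightarrow> micro_reversible N K M w z"
    by (rule micro_reversible_lazy_mat_iff[OF h0])
  fix F assume kimura: "k = 2 \<and> kimura N M \<and> fixation_probability N M F"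
  then show "kimura N (lazy_mat h M)"
    using admissible_with_lazy_mat[OF _ h] unfolding kimura_def by blast
  show "fixation_probability N (lazy_mat h M) F"
    using kimura fixation_probability_lazy_mat_iff[OF h0] by blast
qed

end
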